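(* Let $G$ be a trigraph containing a fence gadget $F$ attached to a set $S$ and satisfying the attachment rule in $G$ with set $X$, and let $Y=V(G)\setminus(V(F)\cup S\cup X)$. In any partial $4$-sequence from $G$, as long as no contraction has involved two vertices of $V(F)$, no part intersects both $X$ and $S$, no part intersects both $Y$ and $S$, and no part intersects both $X$ and $Y$.
   Context: A trigraph $G$ consists of a vertex set $V(G)$ and two disjoint sets of unordered pairs of distinct vertices: black edges and red edges; the red graph is formed by the red edges. Contracting two distinct vertices $u,v$ replaces them by a new vertex $w$ such that, for every other vertex $z$, $wz$ is black if $uz,vz$ are both black, a non-edge if both are non-edges, and red otherwise. A partial $d$-sequence from $G$ is a sequence of trigraphs starting at $G$, each obtained from the previous by one contraction, all of maximum red degree at most $d$. Each vertex $u$ of a later trigraph corresponds to the set $u(G)$ (its part) of vertices of $G$ merged into it; a contraction of $u,u'$ involves a vertex $v$ of $G$ if $v\in u(G)\cup u'(G)$, and involves a pair $v,v'$ if $v\in u(G),v'\in u'(G)$ or vice versa. A fence gadget is a trigraph $F$ on $A\cup B$, $A=\{a_1,\dots,a_6\}$, $B=\{b_1,\dots,b_6\}$, whose black edges are those of the cycles $a_1a_2a_3a_4a_5a_6a_1$ and $b_1b_2b_3b_4b_5b_6b_1$ together with $b_1a_6$, and whose red edges are $a_ib_i$ for $i\in[6]$ and $a_ib_{i+1}$ for $i\in[5]$. Inside a trigraph $G$, $F$ is attached to a nonempty set $S\subseteq V(G)\setminus V(F)$ if every vertex of $A$ is joined by a black edge to every vertex of $S$ and no vertex of $B$ is adjacent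 to a vertex of $S$. $F$ satisfies the attachment rule in $G$ if $V(F)$ is the vertex set of a connected component of the red graph of $G$ and there is a set $X\subseteq V(G)\setminus(V(F)\cup S)$ such that every vertex of $A$ has exactly $X\cup S$ as its set of neighbours outside $V(F)$, every vertex of $B$ has exactly $X$ as its set of neighbours outside $V(F)$ (all these edges black), and every vertex of $X$ is adjacent to every vertex of $S$. *)

theory Defs
  imports Main
begin

record 'v trigraph =
  verts :: "'v set"
  blk :: "'v set set"
  rd :: "'v set set"

definition wf_trigraph :: "'v trigraph \<Rightarrow> bool" where
  "wf_trigraph G \<longleftrightarrow> finite (verts G)
     \<and> (\<forall>e \<in> blk G \<union> rd G. \<exists>x y. e = {x, y} \<and> x \<noteq> y \<and> x \<in> verts G \<and> y \<in> verts G)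
     \<and> blk G \<inter> rd G = {}"

definition adjacent :: "'v trigraph \<Rightarrow> 'v \<Rightarrow> 'v \<Rightarrow> bool" where
  "adjacent G x y \<longleftrightarrow> {x, y} \<in> blk G \<or> {x, y} \<in> rd G"

definition nonedge :: "'v trigraph \<Rightarrow> 'v \<Rightarrow> 'v \<Rightarrow> bool" where
  "nonedge G x y \<longleftrightarrow> {x, y} \<notin> blk G \<and> {x, y} \<notin> rd G"

text \<open>Lifting: every vertex v of G becomes the part {v}. In the sequences considered,
  every vertex is identified with its part u(G).\<close>
definition lift :: "'v trigraph \<Rightarrow> 'v set trigraph" where
  "lift G = \<lparr> verts = (\<lambda>v. {v}) ` verts G,
              blk = (\<lambda>e. (\<lambda>v. {v}) ` e) ` blk G,
              rd = (\<lambda>e. (\<lambda>v. {v}) ` e) ` rd G \<rparr>"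

definition contract :: "'v set trigraph \<Rightarrow> 'v set \<Rightarrow> 'v set \<Rightarrow> 'v set trigraph" where
  "contract H u v = \<lparr> verts = (verts H - {u, v}) \<union> {u \<union> v},
     blk = {e \<in> blk H. u \<notin> e \<and> v \<notin> e}
           \<union> {{u \<union> v, z} | z. z \<in> verts H - {u, v} \<and> {u, z} \<in> blk H \<and> {v, z} \<in> blk H},
     rd = {e \<in> rd H. u \<notin> e \<and> v \<notin> e}
           \<union> {{u \<union> v, z} | z. z \<in> verts H - {u, v}
                 \<and> \<not> ({u, z} \<in> blk H \<and> {v, z} \<in> blk H)
                 \<and> \<not> (nonedge H u z \<and> nonedge H v z)} \<rparr>"

definition red_deg :: "'a trigraph \<Rightarrow> 'a \<Rightarrow> nat" where
  "red_deg H x = card {y \<in> verts H. {x, y} \<in> rd H}"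

definition partial_seq :: "nat \<Rightarrow> 'v trigraph \<Rightarrow> 'v set trigraph list \<Rightarrow> ('v set \<times> 'v set) list \<Rightarrow> bool" where
  "partial_seq d G Gs cs \<longleftrightarrow>
     length Gs = Suc (length cs) \<and> Gs ! 0 = lift G
     \<and> (\<forall>i < length cs. fst (cs ! i) \<in> verts (Gs ! i) \<and> snd (cs ! i) \<in> verts (Gs ! i)
          \<and> fst (cs ! i) \<noteq> snd (cs ! i)
          \<and> Gs ! Suc i = contract (Gs ! i) (fst (cs ! i)) (snd (cs ! i)))
     \<and> (\<forall>H \<in> set Gs. \<forall>x \<in> verts H. red_deg H x \<le> d)"

definition involves_pair :: "'v set \<times> 'v set \<Rightarrow> 'v \<Rightarrow> 'v \<Rightarrow> bool" where
  "involves_pair c x y \<longleftrightarrow> (x \<in> fst c \<and> y \<in> snd c) \<or> (y \<in> fst c \<and> x \<in> snd c)"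

definition fence_verts :: "(nat \<Rightarrow> 'v) \<Rightarrow> (nat \<Rightarrow> 'v) \<Rightarrow> 'v set" where
  "fence_verts a b = a ` {1..6} \<union> b ` {1..6}"

definition fence_black :: "(nat \<Rightarrow> 'v) \<Rightarrow> (nat \<Rightarrow> 'v) \<Rightarrow> 'v set set" where
  "fence_black a b = {{a i, a (Suc i)} | i. i \<in> {1..5}} \<union> {{a 6, a 1}}
     \<union> {{b i, b (Suc i)} | i. i \<in> {1..5}} \<union> {{b 6, b 1}} \<union> {{b 1, a 6}}"

definition fence_red :: "(nat \<Rightarrow> 'v) \<Rightarrow> (nat \<Rightarrow> 'v) \<Rightarrow> 'v set set" where
  "fence_red a b = {{a i, b i} | i. i \<in> {1..6}} \<union> {{a i, b (Suc i)} | i. i \<in> {1..5}}"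

definition fence_in :: "'v trigraph \<Rightarrow> (nat \<Rightarrow> 'v) \<Rightarrow> (nat \<Rightarrow> 'v) \<Rightarrow> bool" where
  "fence_in G a b \<longleftrightarrow> inj_on a {1..6} \<and> inj_on b {1..6} \<and> a ` {1..6} \<inter> b ` {1..6} = {}
     \<and> fence_verts a b \<subseteq> verts G
     \<and> (\<forall>x \<in> fence_verts a b. \<forall>y \<in> fence_verts a b.
          ({x, y} \<in> blk G \<longleftrightarrow> {x, y} \<in> fence_black a b)
        \<and> ({x, y} \<in> rd G \<longleftrightarrow> {x, y} \<in> fence_red a b))"

definition attached :: "'v trigraph \<Rightarrow> (nat \<Rightarrow> 'v) \<Rightarrow> (nat \<Rightarrow> 'v) \<Rightarrow> 'v set \<Rightarrow> bool" where
  "attached G a b S \<longleftrightarrow> S \<noteq> {} \<and> S \<subseteq> verts G - fence_verts a b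
     \<and> (\<forall>i \<in> {1..6}. \<forall>s \<in> S. {a i, s} \<in> blk G)
     \<and> (\<forall>i \<in> {1..6}. \<forall>s \<in> S. \<not> adjacent G (b i) s)"

definition red_component :: "'v trigraph \<Rightarrow> 'v set \<Rightarrow> bool" where
  "red_component G C \<longleftrightarrow> C \<noteq> {} \<and> C \<subseteq> verts G
     \<and> (\<forall>x \<in> C. \<forall>y \<in> C. (x, y) \<in> {(p, q). p \<in> C \<and> q \<in> C \<and> {p, q} \<in> rd G}\<^sup>*)
     \<and> (\<forall>x \<in> C. \<forall>y \<in> verts G - C. {x, y} \<notin> rd G)"

definition attachment_rule :: "'v trigraph \<Rightarrow> (nat \<Rightarrow> 'v) \<Rightarrow> (nat \<Rightarrow> 'v) \<Rightarrow> 'v set \<Rightarrow> 'v set \<Rightarrow> bool" where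
  "attachment_rule G a b S X \<longleftrightarrow> red_component G (fence_verts a b)
     \<and> X \<subseteq> verts G - (fence_verts a b \<union> S)
     \<and> (\<forall>i \<in> {1..6}. {z \<in> verts G - fence_verts a b. adjacent G (a i) z} = X \<union> S
                    \<and> (\<forall>z \<in> X \<union> S. {a i, z} \<in> blk G))
     \<and> (\<forall>i \<in> {1..6}. {z \<in> verts G - fence_verts a b. adjacent G (b i) z} = X
                    \<and> (\<forall>z \<in> X. {b i, z} \<in> blk G))
     \<and> (\<forall>x \<in> X. \<forall>s \<in> S. adjacent G x s)"

end

theory Submission
  imports Defs
begin

text \<open>Every trigraph of a partial sequence is the quotient of G by its parts: two parts are
  joined by a black edge iff all pairs between them are black edges of G, are non-adjacent iff
  all pairs are non-edges of G, and are joined by a red edge otherwise. As long as no pair of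
  fence vertices has been contracted, the six vertices of A, and the six of B, lie in six
  distinct parts. A part containing a vertex black to all of A (or B) and a vertex adjacent to
  none of them would then be red to at least five other parts. Vertices of S are black to A and
  those of X black to B, while B is non-adjacent to S and both A and B are non-adjacent to Y.\<close>

definition quotient_trigraph :: "'v trigraph \<Rightarrow> 'v set trigraph \<Rightarrow> bool" where
  "quotient_trigraph G H \<longleftrightarrow> \<Union>(verts H) = verts G \<and> {} \<notin> verts H
     \<and> (\<forall>P\<in>verts H. \<forall>Q\<in>verts H. P \<noteq> Q \<longrightarrow> P \<inter> Q = {})
     \<and> (\<forall>e\<in>blk H \<union> rd H. e \<subseteq> verts H)
     \<and> (\<forall>P\<in>verts H. \<forall>Q\<in>verts H. P \<noteq> Q \<longrightarrow>
          ({P, Q} \<in> blk H \<longleftrightarrow> (\<forall>p\<in>P. \<forall>q\<in>Q. {p, q} \<in> blk G))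
        \<and> (nonedge H P Q \<longleftrightarrow> (\<forall>p\<in>P. \<forall>q\<in>Q. nonedge G p q)))"

definition separates :: "'v set \<Rightarrow> 'v set set \<Rightarrow> bool" where
  "separates F \<P> \<longleftrightarrow> (\<forall>P\<in>\<P>. \<forall>x\<in>F. \<forall>y\<in>F. x \<in> P \<longrightarrow> y \<in> P \<longrightarrow> x = y)"

lemma quotient_trigraph_lift:
  assumes "wf_trigraph G"
  shows "quotient_trigraph G (lift G)"
proof -
  have inj: "inj (\<lambda>e. (\<lambda>v. {v}) ` e)"
    by (simp add: inj_def inj_image_eq_iff)
  have pair: "(\<lambda>v. {v}) ` {p, q} = {{p}, {q}}" for p q :: 'a
    by auto
  have singletons_mem: "{{p}, {q}} \<in> (\<lambda>e. (\<lambda>v. {v}) ` e) ` E \<longleftrightarrow> {p, q} \<in> E" for p q E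
    using inj_image_mem_iff[OF inj, of "{p, q}" E] by (simp add: pair)
  have blk: "{{p}, {q}} \<in> blk (lift G) \<longleftrightarrow> {p, q} \<in> blk G"
   and rd: "{{p}, {q}} \<in> rd (lift G) \<longleftrightarrow> {p, q} \<in> rd G" for p q
    unfolding lift_def by (simp_all only: trigraph.simps singletons_mem)
  have "e \<subseteq> verts G" if "e \<in> blk G \<union> rd G" for e
  proof -
    have "\<exists>x y. e = {x, y} \<and> x \<noteq> y \<and> x \<in> verts G \<and> y \<in> verts G"
      using assms that unfolding wf_trigraph_def by (elim conjE bspec)
    then show ?thesis by auto
  qed
  then have edges: "\<forall>e\<in>blk (lift G) \<union> rd (lift G). e \<subseteq> verts (lift G)"
    unfolding lift_def by auto
  have faithful: "({P, Q} \<in> blk (lift G) \<longleftrightarrow> (\<forall>p\<in>P. \<forall>q\<in>Q. {p, q} \<in> blk G))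
      \<and> (nonedge (lift G) P Q \<longleftrightarrow> (\<forall>p\<in>P. \<forall>q\<in>Q. nonedge G p q))"
    if "P \<in> verts (lift G)" "Q \<in> verts (lift G)" for P Q
  proof -
    have "P \<in> (\<lambda>v. {v}) ` verts G" "Q \<in> (\<lambda>v. {v}) ` verts G"
      using that by (simp_all add: lift_def)
    then obtain p q where "P = {p}" "Q = {q}"
      by blast
    then show ?thesis
      by (simp add: blk rd nonedge_def)
  qed
  have "\<Union>(verts (lift G)) = verts G" "{} \<notin> verts (lift G)"
    "\<forall>P\<in>verts (lift G). \<forall>Q\<in>verts (lift G). P \<noteq> Q \<longrightarrow> P \<inter> Q = {}"
    by (auto simp: lift_def)
  with edges faithful show ?thesis
    unfolding quotient_trigraph_def by blast
qed

lemma verts_contract: "verts (contract H u v) = verts H - {u, v} \<union> {u \<union> v}"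
  by (simp add: contract_def)

lemma contract_edge_unchanged:
  assumes "\<forall>e\<in>blk H \<union> rd H. e \<subseteq> verts H" and "u \<union> v \<notin> verts H"
    and "P \<in> verts H - {u, v}" and "Q \<in> verts H - {u, v}"
  shows "{P, Q} \<in> blk (contract H u v) \<longleftrightarrow> {P, Q} \<in> blk H"
    and "{P, Q} \<in> rd (contract H u v) \<longleftrightarrow> {P, Q} \<in> rd H"
  using assms by (auto simp: contract_def doubleton_eq_iff)

lemma contract_edge_new:
  assumes "\<forall>e\<in>blk H \<union> rd H. e \<subseteq> verts H" and "u \<union> v \<notin> verts H"
    and "z \<in> verts H - {u, v}"
  shows "{u \<union> v, z} \<in> blk (contract H u v) \<longleftrightarrow> {u, z} \<in> blk H \<and> {v, z} \<in> blk H"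
    and "nonedge (contract H u v) (u \<union> v) z \<longleftrightarrow> nonedge H u z \<and> nonedge H v z"
proof -
  have old: "{u \<union> v, z} \<notin> blk H" "{u \<union> v, z} \<notin> rd H" and "u \<union> v \<noteq> z"
    using assms by blast+
  then show blk: "{u \<union> v, z} \<in> blk (contract H u v) \<longleftrightarrow> {u, z} \<in> blk H \<and> {v, z} \<in> blk H"
    using assms(3) by (auto simp: contract_def doubleton_eq_iff)
  have "{u \<union> v, z} \<in> rd (contract H u v) \<longleftrightarrow>
      \<not> ({u, z} \<in> blk H \<and> {v, z} \<in> blk H) \<and> \<not> (nonedge H u z \<and> nonedge H v z)"
    using old \<open>u \<union> v \<noteq> z\<close> assms(3) by (auto simp: contract_def doubleton_eq_iff)
  with blk show "nonedge (contract H u v) (u \<union> v) z \<longleftrightarrow> nonedge H u z \<and> nonedge H v z"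
    by (auto simp: nonedge_def)
qed

lemma edges_contract:
  assumes "\<forall>e\<in>blk H \<union> rd H. e \<subseteq> verts H"
  shows "\<forall>e\<in>blk (contract H u v) \<union> rd (contract H u v). e \<subseteq> verts (contract H u v)"
proof -
  have "e \<subseteq> verts H - {u, v}" if "e \<in> blk H \<union> rd H" "u \<notin> e" "v \<notin> e" for e
    using assms that by blast
  then show ?thesis
    unfolding contract_def by auto
qed

lemma disjoint_contract:
  assumes disjoint: "\<forall>P\<in>verts H. \<forall>Q\<in>verts H. P \<noteq> Q \<longrightarrow> P \<inter> Q = {}"
    and u: "u \<in> verts H" and v: "v \<in> verts H"
  shows "\<forall>P\<in>verts (contract H u v). \<forall>Q\<in>verts (contract H u v). P \<noteq> Q \<longrightarrow> P \<inter> Q = {}"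
proof -
  have "(u \<union> v) \<inter> Q = {}" if "Q \<in> verts H - {u, v}" for Q
    using disjoint u v that by (metis DiffE Int_Un_distrib2 Un_empty insertCI)
  then show ?thesis
    using disjoint unfolding verts_contract by (auto simp: Int_commute)
qed

lemma nonedge_commute: "nonedge G x y \<longleftrightarrow> nonedge G y x"
  by (simp add: nonedge_def insert_commute)

lemma ball_doubleton_commute:
  "(\<forall>p\<in>P. \<forall>q\<in>Q. R {p, q}) \<longleftrightarrow> (\<forall>q\<in>Q. \<forall>p\<in>P. R {q, p})"
  by (metis insert_commute)

lemma ball_nonedge_commute:
  "(\<forall>p\<in>P. \<forall>q\<in>Q. nonedge G p q) \<longleftrightarrow> (\<forall>q\<in>Q. \<forall>p\<in>P. nonedge G q p)"
  unfolding nonedge_def by (rule ball_doubleton_commute)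

lemma quotient_trigraph_contract:
  assumes quot: "quotient_trigraph G H"
    and u: "u \<in> verts H" and v: "v \<in> verts H" and "u \<noteq> v"
  shows "quotient_trigraph G (contract H u v)"
proof -
  let ?H = "contract H u v"
  define faithful where "faithful K P Q \<longleftrightarrow>
      ({P, Q} \<in> blk K \<longleftrightarrow> (\<forall>p\<in>P. \<forall>q\<in>Q. {p, q} \<in> blk G))
    \<and> (nonedge K P Q \<longleftrightarrow> (\<forall>p\<in>P. \<forall>q\<in>Q. nonedge G p q))" for K P Q
  have faithful_sym: "faithful K Q P" if "faithful K P Q" for K P Q
    using that unfolding faithful_def insert_commute[of Q P] nonedge_commute[of K Q P]
      ball_doubleton_commute[of Q P "\<lambda>e. e \<in> blk G"] ball_nonedge_commute[of Q P]
    by simp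
  have cover: "\<Union>(verts H) = verts G" and nonempty: "{} \<notin> verts H"
    and disjoint: "\<forall>P\<in>verts H. \<forall>Q\<in>verts H. P \<noteq> Q \<longrightarrow> P \<inter> Q = {}"
    and edges: "\<forall>e\<in>blk H \<union> rd H. e \<subseteq> verts H"
    and old: "\<forall>P\<in>verts H. \<forall>Q\<in>verts H. P \<noteq> Q \<longrightarrow> faithful H P Q"
    using quot unfolding quotient_trigraph_def faithful_def by auto
  have "u \<inter> v = {}" "u \<noteq> {}" "v \<noteq> {}"
    using disjoint nonempty u v \<open>u \<noteq> v\<close> by auto
  then have new: "u \<union> v \<notin> verts H"
    using disjoint u v by (metis Int_absorb Un_Int_eq(1,2) Un_empty)
  have faithful_new: "faithful ?H (u \<union> v) z" if z: "z \<in> verts H - {u, v}" for z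
  proof -
    have "faithful H u z" "faithful H v z"
      using old u v z by auto
    then show ?thesis
      unfolding faithful_def contract_edge_new[OF edges new z] by auto
  qed
  have faithful_contract: "faithful ?H P Q"
    if P: "P \<in> verts ?H" and Q: "Q \<in> verts ?H" and "P \<noteq> Q" for P Q
  proof -
    consider "P = u \<union> v" | "Q = u \<union> v" | "P \<in> verts H - {u, v}" "Q \<in> verts H - {u, v}"
      using P Q unfolding verts_contract by blast
    then show ?thesis
    proof cases
      case 1
      with Q \<open>P \<noteq> Q\<close> show ?thesis
        using faithful_new by (simp add: verts_contract)
    next
      case 2
      with P \<open>P \<noteq> Q\<close> show ?thesis
        using faithful_new faithful_sym by (simp add: verts_contract)
    next
      case 3
      with old \<open>P \<noteq> Q\<close> have "faithful H P Q"
        by blast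
      moreover have "{P, Q} \<in> blk ?H \<longleftrightarrow> {P, Q} \<in> blk H" "nonedge ?H P Q \<longleftrightarrow> nonedge H P Q"
        using contract_edge_unchanged[OF edges new 3] by (simp_all add: nonedge_def)
      ultimately show ?thesis
        by (simp add: faithful_def)
    qed
  qed
  show ?thesis
    unfolding quotient_trigraph_def
  proof (intro conjI)
    show "\<Union>(verts ?H) = verts G"
      using cover u v unfolding verts_contract by blast
    show "{} \<notin> verts ?H"
      using nonempty \<open>u \<noteq> {}\<close> unfolding verts_contract by blast
    show "\<forall>P\<in>verts ?H. \<forall>Q\<in>verts ?H. P \<noteq> Q \<longrightarrow> P \<inter> Q = {}"
      by (rule disjoint_contract[OF disjoint u v])
    show "\<forall>e\<in>blk ?H \<union> rd ?H. e \<subseteq> verts ?H"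
      by (rule edges_contract[OF edges])
    show "\<forall>P\<in>verts ?H. \<forall>Q\<in>verts ?H. P \<noteq> Q \<longrightarrow>
        ({P, Q} \<in> blk ?H \<longleftrightarrow> (\<forall>p\<in>P. \<forall>q\<in>Q. {p, q} \<in> blk G))
      \<and> (nonedge ?H P Q \<longleftrightarrow> (\<forall>p\<in>P. \<forall>q\<in>Q. nonedge G p q))"
      using faithful_contract unfolding faithful_def by blast
  qed
qed

lemma separates_contract:
  assumes "separates F (verts H)" and "u \<in> verts H" and "v \<in> verts H"
    and "\<not> (\<exists>x\<in>F. \<exists>y\<in>F. involves_pair (u, v) x y)"
  shows "separates F (verts (contract H u v))"
  unfolding separates_def
proof (intro ballI impI)
  fix P x y assume P: "P \<in> verts (contract H u v)" and xy: "x \<in> F" "y \<in> F" "x \<in> P" "y \<in> P"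
  show "x = y"
  proof (cases "P = u \<union> v")
    case True
    with xy assms(4) have "x \<in> u \<and> y \<in> u \<or> x \<in> v \<and> y \<in> v"
      unfolding involves_pair_def by auto
    with assms(1-3) xy show ?thesis
      unfolding separates_def by blast
  next
    case False
    with P have "P \<in> verts H"
      by (simp add: verts_contract)
    with assms(1) xy show ?thesis
      unfolding separates_def by blast
  qed
qed

lemma quotient_trigraph_partial_seq:
  assumes wf: "wf_trigraph G" and seq: "partial_seq d G Gs cs"
    and avoid: "\<forall>i < length cs. \<not> (\<exists>x\<in>F. \<exists>y\<in>F. involves_pair (cs ! i) x y)"
    and H: "H \<in> set Gs"
  shows "quotient_trigraph G H \<and> separates F (verts H)"
proof -
  obtain i where "i < length Gs" and Hi: "H = Gs ! i"
    using H by (metis in_set_conv_nth)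
  then have "i \<le> length cs"
    using seq by (simp add: partial_seq_def)
  then show ?thesis
    unfolding Hi
  proof (induction i)
    case 0
    have "separates F (verts (lift G))"
      by (auto simp: separates_def lift_def)
    with quotient_trigraph_lift[OF wf] seq show ?case
      by (simp add: partial_seq_def)
  next
    case (Suc i)
    let ?u = "fst (cs ! i)" and ?v = "snd (cs ! i)"
    have step: "?u \<in> verts (Gs ! i)" "?v \<in> verts (Gs ! i)" "?u \<noteq> ?v"
      "Gs ! Suc i = contract (Gs ! i) ?u ?v"
      using seq Suc.prems by (auto simp: partial_seq_def)
    have "\<not> (\<exists>x\<in>F. \<exists>y\<in>F. involves_pair (?u, ?v) x y)"
      using avoid Suc.prems by simp
    moreover have "quotient_trigraph G (Gs ! i) \<and> separates F (verts (Gs ! i))"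
      using Suc by simp
    ultimately show ?case
      unfolding step(4)
      using quotient_trigraph_contract[OF _ step(1-3)] separates_contract[OF _ step(1-2)] by simp
  qed
qed

text \<open>A part P containing a vertex p black to every vertex of T and a vertex q adjacent to
  none of them is red to every other part meeting T; when T is separated, these are
  card T - 1 distinct parts.\<close>
lemma card_le_Suc_red_deg:
  assumes quot: "quotient_trigraph G H" and sep: "separates T (verts H)"
    and fin: "finite (verts G)" and TG: "T \<subseteq> verts G"
    and P: "P \<in> verts H" and p: "p \<in> P" and q: "q \<in> P"
    and black: "\<forall>t\<in>T. {t, p} \<in> blk G" and nonadj: "\<forall>t\<in>T. \<not> adjacent G t q"
  shows "card T \<le> Suc (red_deg H P)"
proof -
  have cover: "\<Union>(verts H) = verts G"
    using quot by (simp add: quotient_trigraph_def)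
  have faithful: "({P, Q} \<in> blk H \<longleftrightarrow> (\<forall>p\<in>P. \<forall>q\<in>Q. {p, q} \<in> blk G))
      \<and> (nonedge H P Q \<longleftrightarrow> (\<forall>p\<in>P. \<forall>q\<in>Q. nonedge G p q))"
    if "Q \<in> verts H" "P \<noteq> Q" for Q
    using quot P that by (simp add: quotient_trigraph_def)
  have "verts H \<subseteq> Pow (verts G)"
    using cover by blast
  then have finH: "finite (verts H)"
    using fin by (simp add: finite_subset)
  have "\<forall>t\<in>T. \<exists>Q. Q \<in> verts H \<and> t \<in> Q"
    using TG cover by blast
  from bchoice[OF this] obtain part where part: "\<forall>t\<in>T. part t \<in> verts H \<and> t \<in> part t"
    by blast
  have inj: "inj_on part T"
  proof (rule inj_onI)
    fix s t assume st: "s \<in> T" "t \<in> T" "part s = part t"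
    then have "part t \<in> verts H" "s \<in> part t" "t \<in> part t"
      using part by metis+
    with sep st show "s = t"
      unfolding separates_def by blast
  qed
  have red: "{P, part t} \<in> rd H" if t: "t \<in> T" "part t \<noteq> P" for t
  proof -
    have "{p, t} \<in> blk G" "{q, t} \<notin> blk G"
      using black nonadj t by (auto simp: adjacent_def insert_commute)
    then have "{P, part t} \<notin> blk H" "\<not> nonedge H P (part t)"
      using faithful[of "part t"] part p q t by (auto simp: nonedge_def)
    then show ?thesis
      by (simp add: nonedge_def)
  qed
  have "part ` T - {P} \<subseteq> {Q \<in> verts H. {P, Q} \<in> rd H}"
    using part red by auto
  then have "card (part ` T - {P}) \<le> red_deg H P"
    unfolding red_deg_def using finH by (simp add: card_mono)
  moreover have "card (part ` T) \<le> Suc (card (part ` T - {P}))"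
    by (cases "card (part ` T)") (simp_all add: card_Diff_singleton_if)
  moreover have "card (part ` T) = card T"
    using inj by (rule card_image)
  ultimately show ?thesis
    by linarith
qed

lemma partial_seq_part_not_joining:
  assumes wf: "wf_trigraph G" and seq: "partial_seq d G Gs cs"
    and avoid: "\<forall>i < length cs. \<not> (\<exists>x\<in>F. \<exists>y\<in>F. involves_pair (cs ! i) x y)"
    and H: "H \<in> set Gs" and P: "P \<in> verts H"
    and T: "T \<subseteq> F" "T \<subseteq> verts G" "d + 2 \<le> card T"
    and black: "\<forall>t\<in>T. {t, p} \<in> blk G" and nonadj: "\<forall>t\<in>T. \<not> adjacent G t q"
  shows "\<not> (p \<in> P \<and> q \<in> P)"
proof (intro notI, elim conjE)
  assume p: "p \<in> P" and q: "q \<in> P"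
  have quot: "quotient_trigraph G H" and "separates F (verts H)"
    using quotient_trigraph_partial_seq[OF wf seq avoid H] by simp_all
  with T(1) have sep: "separates T (verts H)"
    unfolding separates_def by blast
  have fin: "finite (verts G)"
    using wf by (simp add: wf_trigraph_def)
  have "card T \<le> Suc (red_deg H P)"
    by (rule card_le_Suc_red_deg[OF quot sep fin T(2) P p q black nonadj])
  moreover have "red_deg H P \<le> d"
    using seq H P by (simp add: partial_seq_def)
  ultimately show False
    using T(3) by linarith
qed

lemma fence_in_sides:
  assumes "fence_in G a b"
  shows "a ` {1..6} \<subseteq> fence_verts a b \<inter> verts G" "card (a ` {1..6}) = 6"
    and "b ` {1..6} \<subseteq> fence_verts a b \<inter> verts G" "card (b ` {1..6}) = 6"
  using assms by (auto simp: fence_in_def fence_verts_def card_image)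

lemma attachment_rule_nonadjacent_rest:
  assumes "attachment_rule G a b S X" and "i \<in> {1..6}"
    and "y \<in> verts G - (fence_verts a b \<union> S \<union> X)"
  shows "\<not> adjacent G (a i) y" and "\<not> adjacent G (b i) y"
proof -
  have "{z \<in> verts G - fence_verts a b. adjacent G (a i) z} = X \<union> S"
    and "{z \<in> verts G - fence_verts a b. adjacent G (b i) z} = X"
    using assms(1,2) unfolding attachment_rule_def by simp_all
  with assms(3) show "\<not> adjacent G (a i) y" and "\<not> adjacent G (b i) y"
    by blast+
qed

theorem lemma4p7:
  fixes G :: "'v trigraph" and a b :: "nat \<Rightarrow> 'v" and S X Y :: "'v set"
    and Gs :: "'v set trigraph list" and cs :: "('v set \<times> 'v set) list"
  assumes "wf_trigraph G"
    and "fence_in G a b"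
    and "attached G a b S"
    and "attachment_rule G a b S X"
    and "Y = verts G - (fence_verts a b \<union> S \<union> X)"
    and "partial_seq 4 G Gs cs"
    and "\<forall>i < length cs. \<not> (\<exists>x \<in> fence_verts a b. \<exists>y \<in> fence_verts a b. involves_pair (cs ! i) x y)"
  shows "\<forall>H \<in> set Gs. \<forall>P \<in> verts H.
           \<not> (P \<inter> X \<noteq> {} \<and> P \<inter> S \<noteq> {})
         \<and> \<not> (P \<inter> Y \<noteq> {} \<and> P \<inter> S \<noteq> {})
         \<and> \<not> (P \<inter> X \<noteq> {} \<and> P \<inter> Y \<noteq> {})"
proof (intro ballI conjI notI)
  fix H P assume "H \<in> set Gs" and "P \<in> verts H"
  note not_joining = partial_seq_part_not_joining[OF assms(1,6,7) this]
  have a_side: "\<not> (p \<in> P \<and> q \<in> P)"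
    if "\<forall>i\<in>{1..6}. {a i, p} \<in> blk G" "\<forall>i\<in>{1..6}. \<not> adjacent G (a i) q" for p q
    using not_joining[of "a ` {1..6}"] fence_in_sides[OF assms(2)] that by simp
  have b_side: "\<not> (p \<in> P \<and> q \<in> P)"
    if "\<forall>i\<in>{1..6}. {b i, p} \<in> blk G" "\<forall>i\<in>{1..6}. \<not> adjacent G (b i) q" for p q
    using not_joining[of "b ` {1..6}"] fence_in_sides[OF assms(2)] that by simp
  have far_Y: "\<not> adjacent G (a i) y" "\<not> adjacent G (b i) y" if "i \<in> {1..6}" "y \<in> Y" for i y
    using attachment_rule_nonadjacent_rest[OF assms(4) that(1)] that(2) assms(5) by simp_all
  have attach: "\<forall>i\<in>{1..6}. \<forall>x\<in>X. {b i, x} \<in> blk G" "\<forall>i\<in>{1..6}. \<forall>s\<in>S. {a i, s} \<in> blk G"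
    "\<forall>i\<in>{1..6}. \<forall>s\<in>S. \<not> adjacent G (b i) s"
    using assms(3,4) unfolding attached_def attachment_rule_def by simp_all
  show False if "P \<inter> X \<noteq> {} \<and> P \<inter> S \<noteq> {}"
  proof -
    from that obtain x s where "x \<in> P \<inter> X" "s \<in> P \<inter> S" by blast
    with b_side[of x s] attach show False by simp
  qed
  show False if "P \<inter> Y \<noteq> {} \<and> P \<inter> S \<noteq> {}"
  proof -
    from that obtain y s where "y \<in> P \<inter> Y" "s \<in> P \<inter> S" by blast
    with a_side[of s y] attach far_Y show False by simp
  qed
  show False if "P \<inter> X \<noteq> {} \<and> P \<inter> Y \<noteq> {}"
  proof -
    from that obtain x y where "x \<in> P \<inter> X" "y \<in> P \<inter> Y" by blast
    with b_side[of x y] attach far_Y show False by simp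
  qed
qed

end
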